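(* Consider the ViSE model described in the context, with $n$ participants, $\ell$ egoists and $g=n-\ell$ group members ($1\le\ell\le n-1$), $\mu\in\mathbb{R}$, $\sigma>0$ and majority threshold $\alpha\in[0,1)$; let $\delta=\ell/n$, $\gamma=\alpha+\delta-1$, $\beta=\ell/(n-\ell)$, and let $t_0$ be the group's claims threshold maximizing the expected one-step capital increment of the society, namely $t_0=\frac{\beta}{F_{\gamma n}-F_{\alpha n}}\big(\mu^+(\mu,\sigma,\ell,\alpha n)-\mu^+(\mu,\sigma,\ell,\gamma n)\big)$. Then: (i) if $\alpha<1-\delta$, then $t_0=\frac{\beta}{1-F_{\alpha n}}\big(\mu^+(\mu,\sigma,\ell,\alpha n)-\mu\big)$; (ii) if $\delta\le\alpha$, then $t_0=-\frac{\beta}{F_{\gamma n}}\,\mu^+(\mu,\sigma,\ell,\gamma n)$; (iii) if $\delta\le\alpha<1-\delta$, then $t_0=-\beta\mu$.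
   Context: ViSE model (one voting step). A society consists of $n$ participants: $\ell$ "egoists" and $g=n-\ell$ "group members", $1\le\ell\le n-1$. Fix $\mu\in\mathbb{R}$, $\sigma>0$, a majority threshold $\alpha$ and a group claims threshold $t\in\mathbb{R}$. A proposal is a random vector $(\zeta_1,\dots,\zeta_n)$ of independent $N(\mu,\sigma^2)$ random variables, $\zeta_i$ being the proposed capital increment of participant $i$. Each egoist votes for the proposal iff his own component is strictly positive. All group members vote for the proposal iff the arithmetic mean of the group members' components is strictly greater than $t$; otherwise they all vote against. The proposal is accepted iff the number of votes for it is strictly greater than $\alpha n$. If accepted, each participant's capital increment equals his component; otherwise it is $0$. $F$ denotes the standard normal distribution function. $p=F(\mu/\sigma)$, $q=1-p$, and for real $\xi$, $F_\xi=\sum_{x=\max(0,[\xi]+1)}^{\ell}\binom{\ell}{x}p^xq^{\ell-x}$ ($[\xi]$ the integer part; empty sum $=0$), the probability that more than $\xi$ egoists vote for the proposal. For integer $\ell\ge1$ and real $\ell_0$, $\mu^+(\mu,\sigma,\ell,\ell_0)=\mathrm{M}\big(\xi_1\cdot\mathbf{1}\{\#\{i:\xi_i>0\}>\ell_0\}\big)$ where $\xi_1,\dots,\xi_\ell$ are i.i.d. $N(\mu,\sigma^2)$. *)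

theory Defs
  imports "HOL-Probability.Probability"
begin

definition std_normal_cdf :: "real \<Rightarrow> real" where
  "std_normal_cdf x = measure (density lborel std_normal_density) {..x}"

text \<open>F_xi: probability that more than xi of the ell egoists vote for the proposal,
  with p = F(mu/sigma), q = 1 - p.\<close>
definition F_more :: "real \<Rightarrow> real \<Rightarrow> nat \<Rightarrow> real \<Rightarrow> real" where
  "F_more \<mu> \<sigma> l \<xi> =
     (let p = std_normal_cdf (\<mu> / \<sigma>); q = 1 - p in
      \<Sum>x\<in>{nat (max 0 (\<lfloor>\<xi>\<rfloor> + 1))..l}. real (l choose x) * p ^ x * q ^ (l - x))"

text \<open>mu^+(mu, sigma, ell, ell0) = M(xi_1 * 1{#{i : xi_i > 0} > ell0}),
  xi_1..xi_ell i.i.d. N(mu, sigma^2); indices are 0..ell-1, xi_1 is component 0.\<close>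
definition mu_plus :: "real \<Rightarrow> real \<Rightarrow> nat \<Rightarrow> real \<Rightarrow> real" where
  "mu_plus \<mu> \<sigma> l l0 =
     integral\<^sup>L (PiM {..<l} (\<lambda>_. density lborel (normal_density \<mu> \<sigma>)))
       (\<lambda>\<xi>. \<xi> 0 * (if real (card {i\<in>{..<l}. \<xi> i > 0}) > l0 then 1 else 0))"

definition t0 :: "real \<Rightarrow> real \<Rightarrow> nat \<Rightarrow> nat \<Rightarrow> real \<Rightarrow> real" where
  "t0 \<mu> \<sigma> n l \<alpha> =
     (let \<delta> = real l / real n; \<gamma> = \<alpha> + \<delta> - 1; \<beta> = real l / (real n - real l) in
      \<beta> / (F_more \<mu> \<sigma> l (\<gamma> * n) - F_more \<mu> \<sigma> l (\<alpha> * n))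
        * (mu_plus \<mu> \<sigma> l (\<alpha> * n) - mu_plus \<mu> \<sigma> l (\<gamma> * n)))"

end

theory Submission
  imports Defs
begin

text \<open>Only the two degenerate regimes of the thresholds are involved. If \<open>\<gamma> n < 0\<close>, the event
  ``more than \<open>\<gamma> n\<close> egoists vote for'' is certain, so \<open>F\<^sub>\<gamma>\<^sub>n = 1\<close> by the binomial theorem
  and \<open>\<mu>\<^sup>+(\<gamma> n)\<close> is the plain mean \<open>\<mu>\<close> of one component. If \<open>\<alpha> n \<ge> \<ell>\<close>, that event for \<open>\<alpha> n\<close>
  is impossible, so \<open>F\<^sub>\<alpha>\<^sub>n = 0\<close> and \<open>\<mu>\<^sup>+(\<alpha> n) = 0\<close>.\<close>

lemma F_more_negative:
  assumes "\<xi> < 0"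
  shows "F_more \<mu> \<sigma> l \<xi> = 1"
proof -
  let ?p = "std_normal_cdf (\<mu> / \<sigma>)"
  have "nat (max 0 (\<lfloor>\<xi>\<rfloor> + 1)) = 0" using assms by linarith
  then have "F_more \<mu> \<sigma> l \<xi> = (\<Sum>x\<le>l. real (l choose x) * ?p ^ x * (1 - ?p) ^ (l - x))"
    unfolding F_more_def Let_def by (simp add: atLeast0AtMost)
  also have "\<dots> = (?p + (1 - ?p)) ^ l"
    by (subst binomial_ring) simp
  finally show ?thesis by simp
qed

lemma F_more_ge_card:
  assumes "real l \<le> \<xi>"
  shows "F_more \<mu> \<sigma> l \<xi> = 0"
proof -
  have "l < nat (max 0 (\<lfloor>\<xi>\<rfloor> + 1))" using assms by linarith
  then show ?thesis unfolding F_more_def Let_def by simp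
qed

lemma mu_plus_ge_card:
  assumes "real l \<le> l0"
  shows "mu_plus \<mu> \<sigma> l l0 = 0"
proof -
  have "\<not> real (card {i\<in>{..<l}. \<xi> i > 0}) > l0" for \<xi> :: "nat \<Rightarrow> real"
  proof -
    have "card {i\<in>{..<l}. \<xi> i > 0} \<le> l"
      using card_mono[of "{..<l}" "{i\<in>{..<l}. \<xi> i > 0}"] by auto
    then show ?thesis using assms by linarith
  qed
  then show ?thesis unfolding mu_plus_def by simp
qed

lemma mu_plus_negative:
  assumes "l0 < 0" and "1 \<le> l" and "\<sigma> > 0"
  shows "mu_plus \<mu> \<sigma> l l0 = \<mu>"
proof -
  let ?N = "density lborel (normal_density \<mu> \<sigma>)"
  have first: "(0::nat) \<in> {..<l}" using assms(2) by simp
  have "mu_plus \<mu> \<sigma> l l0 = integral\<^sup>L (PiM {..<l} (\<lambda>_. ?N)) (\<lambda>\<xi>. \<xi> 0)"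
    unfolding mu_plus_def using assms(1) by (intro Bochner_Integration.integral_cong) auto
  also have "\<dots> = integral\<^sup>L (distr (PiM {..<l} (\<lambda>_. ?N)) ?N (\<lambda>\<xi>. \<xi> 0)) (\<lambda>x. x)"
    by (subst integral_distr[OF measurable_component_singleton[OF first]]) auto
  also have "\<dots> = integral\<^sup>L ?N (\<lambda>x. x)"
    by (subst distr_PiM_component[OF prob_space_normal_density[OF assms(3)] first]) simp
  also have "\<dots> = integral\<^sup>L lborel (\<lambda>x. normal_density \<mu> \<sigma> x * x)"
    by (subst integral_density) auto
  also have "\<dots> = \<mu>"
    using integral_normal_moment_nz_1[OF assms(3)] .
  finally show ?thesis .
qed

theorem mainTheorem4:
  fixes n l :: nat and \<mu> \<sigma> \<alpha> :: real
  assumes "1 \<le> l" and "l \<le> n - 1" and "\<sigma> > 0" and "0 \<le> \<alpha>" and "\<alpha> < 1"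
  defines "\<delta> \<equiv> real l / real n"
      and "\<gamma> \<equiv> \<alpha> + real l / real n - 1"
      and "\<beta> \<equiv> real l / (real n - real l)"
  shows "(\<alpha> < 1 - \<delta> \<longrightarrow>
            t0 \<mu> \<sigma> n l \<alpha> = \<beta> / (1 - F_more \<mu> \<sigma> l (\<alpha> * n))
               * (mu_plus \<mu> \<sigma> l (\<alpha> * n) - \<mu>))
       \<and> (\<delta> \<le> \<alpha> \<longrightarrow>
            t0 \<mu> \<sigma> n l \<alpha> = - (\<beta> / F_more \<mu> \<sigma> l (\<gamma> * n)) * mu_plus \<mu> \<sigma> l (\<gamma> * n))
       \<and> (\<delta> \<le> \<alpha> \<and> \<alpha> < 1 - \<delta> \<longrightarrow> t0 \<mu> \<sigma> n l \<alpha> = - \<beta> * \<mu>)"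
proof -
  have n_pos: "real n > 0" using assms(1,2) by simp
  have t0_eq: "t0 \<mu> \<sigma> n l \<alpha> = \<beta> / (F_more \<mu> \<sigma> l (\<gamma> * n) - F_more \<mu> \<sigma> l (\<alpha> * n))
        * (mu_plus \<mu> \<sigma> l (\<alpha> * n) - mu_plus \<mu> \<sigma> l (\<gamma> * n))"
    unfolding t0_def Let_def \<gamma>_def \<beta>_def by simp
  have gamma_neg: "\<gamma> * n < 0" if "\<alpha> < 1 - \<delta>"
    using that n_pos unfolding \<gamma>_def \<delta>_def by (simp add: mult_neg_pos)
  have alpha_ge: "real l \<le> \<alpha> * n" if "\<delta> \<le> \<alpha>"
    using that n_pos unfolding \<delta>_def by (simp add: divide_le_eq)
  show ?thesis
    using t0_eq gamma_neg alpha_ge assms(1,3)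
    by (simp add: F_more_negative mu_plus_negative F_more_ge_card mu_plus_ge_card)
qed

end
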